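(* Let $p$ be a positive integer, let $q,s$ be positive integers with $4q=9s$, let $r_1,\dots,r_p$ be positive integers with $\gcd(r_i,2q)=1$, and let $t$ be a positive integer with $\gcd(t,3s)=1$. Let $\Omega=\{(U,V)\in\mathbb R^2:a<UV<b\}$ with $-\infty\le a<0<b\le\infty$ and $S^{4p+5}=\{(z,w,x)\in\mathbb C^p\times\mathbb C^p\times\mathbb C^3:|z|^2+|w|^2+|x|^2=1\}$. Define $K_2:\Omega\times S^{4p+5}\to\Omega\times S^{4p+5}$ by $K_2(U,V,z,w,x_1,x_2,x_3)=(V,U,w,\zeta z,x_2,x_3,\omega x_1)$, where $(\zeta z)_j=e^{i\pi r_j/q}z_j$ and $\omega=e^{2\pi i t/(3s)}$. Then $K_2$ generates a cyclic group of order $4q=9s$ acting freely and properly discontinuously on $\Omega\times S^{4p+5}$; moreover $K_2^2$ acts trivially on $\Omega$ and generates a cyclic group of order $2q$ acting freely on $S^{4p+5}$. In particular the smallest admissible $q$ is $9$.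
   Context: In Myers–Perry angle coordinates ($z_j=\mu_je^{i\theta_j}$, $w_j=\nu_je^{i\varphi_j}$, $x_k=\rho_ke^{i\psi_k}$), $K_2$ maps $(U,V,\mu,\nu,\rho_1,\rho_2,\rho_3,\theta,\varphi,\psi_1,\psi_2,\psi_3)$ to $(V,U,\nu,\mu,\rho_2,\rho_3,\rho_1,\varphi,\theta+(\pi/q)r,\psi_2,\psi_3,\psi_1+2\pi t/(3s))$. In the paper this models the $D=4p+7$ Myers–Perry(-AdS) black hole with angular momentum in $\theta_i$ equal to minus that in $\varphi_i$ and vanishing angular momenta in the $\psi_k$, for which $K_2$ is an isometry and the quotient is a rotating geon. *)

theory Defs
  imports "HOL-Analysis.Analysis" "HOL-Library.Extended_Real"
begin

type_synonym 'n sphpt = "(complex^'n) \<times> (complex^'n) \<times> complex \<times> complex \<times> complex"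

definition Omega :: "ereal \<Rightarrow> ereal \<Rightarrow> (real \<times> real) set" where
  "Omega a b = {(U, V). a < ereal (U * V) \<and> ereal (U * V) < b}"

text \<open>The unit sphere S^{4p+5} in C^p x C^p x C^3, p = CARD('n).\<close>
definition Sph :: "'n::finite sphpt set" where
  "Sph = {(z, w, x1, x2, x3). (norm z)^2 + (norm w)^2 + (cmod x1)^2 + (cmod x2)^2 + (cmod x3)^2 = 1}"

definition zeta_act :: "nat \<Rightarrow> ('n::finite \<Rightarrow> nat) \<Rightarrow> complex^'n \<Rightarrow> complex^'n" where
  "zeta_act q r z = (\<chi> j. exp (\<i> * complex_of_real (pi * real (r j) / real q)) * z $ j)"

definition omega :: "nat \<Rightarrow> nat \<Rightarrow> complex" where
  "omega t s = exp (2 * pi * \<i> * complex_of_real (real t / (3 * real s)))"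

definition K2_sph :: "nat \<Rightarrow> ('n::finite \<Rightarrow> nat) \<Rightarrow> nat \<Rightarrow> nat \<Rightarrow> 'n sphpt \<Rightarrow> 'n sphpt" where
  "K2_sph q r t s = (\<lambda>(z, w, x1, x2, x3). (w, zeta_act q r z, x2, x3, omega t s * x1))"

definition K2 :: "nat \<Rightarrow> ('n::finite \<Rightarrow> nat) \<Rightarrow> nat \<Rightarrow> nat \<Rightarrow>
    (real \<times> real) \<times> 'n sphpt \<Rightarrow> (real \<times> real) \<times> 'n sphpt" where
  "K2 q r t s = (\<lambda>((U, V), y). ((V, U), K2_sph q r t s y))"

definition generates_cyclic_of_order :: "('a \<Rightarrow> 'a) \<Rightarrow> 'a set \<Rightarrow> nat \<Rightarrow> bool" where
  "generates_cyclic_of_order g X n \<longleftrightarrow> 0 < n \<and> (\<forall>x\<in>X. (g ^^ n) x = x) \<and>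
     (\<forall>k. 0 < k \<and> k < n \<longrightarrow> \<not> (\<forall>x\<in>X. (g ^^ k) x = x))"

definition acts_freely :: "('a \<Rightarrow> 'a) \<Rightarrow> nat \<Rightarrow> 'a set \<Rightarrow> bool" where
  "acts_freely g n X \<longleftrightarrow> (\<forall>k x. 0 < k \<and> k < n \<and> x \<in> X \<longrightarrow> (g ^^ k) x \<noteq> x)"

definition properly_discontinuous :: "('a::topological_space \<Rightarrow> 'a) \<Rightarrow> nat \<Rightarrow> 'a set \<Rightarrow> bool" where
  "properly_discontinuous g n X \<longleftrightarrow> (\<forall>x\<in>X. \<exists>U. openin (top_of_set X) U \<and> x \<in> U \<and>
     (\<forall>k. 0 < k \<and> k < n \<longrightarrow> (g ^^ k) ` U \<inter> U = {}))"

end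

theory Submission
  imports Defs
begin

(* On Omega, K2 merely swaps U and V; on the sphere it acts separately on (z, w) and on
   x = (x1, x2, x3).  The square of (z, w) |-> (w, zeta z) is the diagonal map zeta x zeta, whose
   j-th entry exp (i pi r_j / q) is a primitive 2q-th root of unity because gcd (r_j, 2q) = 1;
   the cube of (x1, x2, x3) |-> (x2, x3, omega x1) is multiplication by omega, a primitive
   3s-th root of unity.  So K2^k can fix a point with nonzero (z, w)-part only if 4q divides k,
   and one with nonzero x-part only if 9s divides k: since 4q = 9s, every point of
   Omega x S^(4p+5) has period exactly 4q.  A free action of a finite cyclic group by
   homeomorphisms of a Hausdorff space is properly discontinuous, and the statements about K2^2
   are the same facts read off at even exponents. *)

lemma funpow_fixed: "f x = x \<Longrightarrow> (f ^^ n) x = x"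
  by (induction n) auto

lemma funpow_fixed_exponent_dvd:
  assumes "n dvd c" and block: "\<And>m. (f ^^ (n * m)) x = x \<Longrightarrow> c dvd m"
    and fixed: "(f ^^ k) x = x"
  shows "n * c dvd k"
proof -
  have "(f ^^ (n * k)) x = x"
    using funpow_fixed[of "f ^^ k" x n, OF fixed] by (simp add: funpow_mult mult.commute)
  then have "c dvd k" by (rule block)
  then obtain m where k: "k = n * m" using \<open>n dvd c\<close> by (metis dvd_trans dvdE)
  then have "c dvd m" using block fixed by simp
  then show ?thesis using k by simp
qed

lemma funpow_image_subset: "g ` X \<subseteq> X \<Longrightarrow> (g ^^ k) ` X \<subseteq> X"
  by (induction k) (auto simp: image_subset_iff)

lemma continuous_on_funpow:
  assumes "continuous_on X g" and "g ` X \<subseteq> X"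
  shows "continuous_on X (g ^^ k)"
proof (induction k)
  case (Suc k)
  then show ?case
    using assms funpow_image_subset[OF assms(2), of k]
    by (auto intro: continuous_on_compose2)
qed (simp add: continuous_on_id')

lemma homeomorphism_if_periodic:
  assumes cont: "continuous_on X g" and into: "g ` X \<subseteq> X"
    and "0 < n" and period: "\<forall>x\<in>X. (g ^^ n) x = x"
  shows "homeomorphism X X g (g ^^ (n - 1))"
proof
  have n: "Suc (n - 1) = n" using \<open>0 < n\<close> by simp
  show "(g ^^ (n - 1)) (g x) = x" if "x \<in> X" for x
    using period that by (metis funpow_Suc_right n comp_apply)
  show "g ((g ^^ (n - 1)) x) = x" if "x \<in> X" for x
    using period that by (metis funpow.simps(2) n comp_apply)
qed (use cont into continuous_on_funpow funpow_image_subset[OF into] in auto)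

lemma acts_freely_if_fixed_exponent_dvd:
  assumes "\<And>x k. x \<in> X \<Longrightarrow> (g ^^ k) x = x \<Longrightarrow> n dvd k"
  shows "acts_freely g n X"
  using assms nat_dvd_not_less unfolding acts_freely_def by blast

lemma acts_freely_funpow:
  assumes "0 < m" and "acts_freely g (m * n) X"
  shows "acts_freely (g ^^ m) n X"
  using assms unfolding acts_freely_def funpow_mult by simp

lemma generates_cyclic_of_order_if_free:
  assumes "0 < n" and "x\<^sub>0 \<in> X" and "\<forall>x\<in>X. (g ^^ n) x = x" and "acts_freely g n X"
  shows "generates_cyclic_of_order g X n"
  using assms unfolding generates_cyclic_of_order_def acts_freely_def by blast

lemma properly_discontinuous_if_free:
  fixes g :: "'a::t2_space \<Rightarrow> 'a"
  assumes cont: "continuous_on UNIV g" and free: "acts_freely g n X"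
  shows "properly_discontinuous g n X"
  unfolding properly_discontinuous_def
proof
  fix x assume x: "x \<in> X"
  have "\<exists>W. open W \<and> x \<in> W \<and> (g ^^ k) ` W \<inter> W = {}" if k: "k \<in> {0<..<n}" for k
  proof -
    have "(g ^^ k) x \<noteq> x" using free x k unfolding acts_freely_def by auto
    then obtain A B where AB: "open A" "open B" "x \<in> A" "(g ^^ k) x \<in> B" "A \<inter> B = {}"
      by (metis hausdorff)
    have "open ((g ^^ k) -` B)"
      using continuous_on_funpow[OF cont] AB(2) by (simp add: continuous_on_open_vimage)
    then show ?thesis using AB by (intro exI[of _ "A \<inter> (g ^^ k) -` B"]) auto
  qed
  then obtain W
    where W: "\<And>k. k \<in> {0<..<n} \<Longrightarrow> open (W k) \<and> x \<in> W k \<and> (g ^^ k) ` W k \<inter> W k = {}"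
    by metis
  define U where "U = X \<inter> (\<Inter>k\<in>{0<..<n}. W k)"
  have "openin (top_of_set X) U"
    unfolding U_def using W by (intro openin_open_Int open_INT) auto
  moreover have "x \<in> U" using x W unfolding U_def by auto
  moreover have "(g ^^ k) ` U \<inter> U = {}" if "0 < k \<and> k < n" for k
  proof -
    have "U \<subseteq> W k" "(g ^^ k) ` W k \<inter> W k = {}" using that W unfolding U_def by auto
    then show ?thesis by blast
  qed
  ultimately show "\<exists>U. openin (top_of_set X) U \<and> x \<in> U \<and>
      (\<forall>k. 0 < k \<and> k < n \<longrightarrow> (g ^^ k) ` U \<inter> U = {})"
    by blast
qed

definition unit_root :: "nat \<Rightarrow> nat \<Rightarrow> complex" where
  "unit_root n m = exp (2 * pi * \<i> * complex_of_real (real m / real n))"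

lemma unit_root_add: "unit_root n (a + b) = unit_root n a * unit_root n b"
  unfolding unit_root_def exp_add[symmetric] by (simp add: add_divide_distrib algebra_simps)

lemma unit_root_0 [simp]: "unit_root n 0 = 1"
  by (simp add: unit_root_def)

lemma unit_root_power: "unit_root n a ^ m = unit_root n (a * m)"
  by (induction m) (simp_all add: unit_root_add[symmetric])

lemma unit_root_eq_1_iff:
  assumes "0 < n"
  shows "unit_root n m = 1 \<longleftrightarrow> n dvd m"
proof -
  have "unit_root n m = 1 \<longleftrightarrow> (\<exists>k::int. 2 * pi * (real m / real n) = of_int (2 * k) * pi)"
    by (simp add: unit_root_def exp_eq_1)
  also have "\<dots> \<longleftrightarrow> (\<exists>k::int. int m = int n * k)"
    using assms by (auto simp: field_simps) (metis of_int_eq_iff of_int_mult of_int_of_nat_eq)+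
  also have "\<dots> \<longleftrightarrow> n dvd m"
    by (metis dvd_def int_dvd_int_iff)
  finally show ?thesis .
qed

lemma unit_root_eq_1_if_dvd: "n dvd m \<Longrightarrow> unit_root n m = 1"
  by (cases "n = 0") (simp_all add: unit_root_eq_1_iff)

lemma zeta_act_eq: "zeta_act q r z = (\<chi> j. unit_root (2 * q) (r j) * z $ j)"
  unfolding zeta_act_def unit_root_def by (simp add: field_simps)

lemma omega_power: "omega t s ^ m = unit_root (3 * s) (t * m)"
proof -
  have "omega t s = unit_root (3 * s) t" by (simp add: omega_def unit_root_def)
  then show ?thesis by (simp add: unit_root_power)
qed

lemma zeta_act_funpow: "(zeta_act q r ^^ m) z = (\<chi> j. unit_root (2 * q) (r j * m) * z $ j)"
  by (induction m) (simp_all add: vec_eq_iff zeta_act_eq mult.assoc unit_root_add[symmetric])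

lemma zeta_act_funpow_period: "2 * q dvd m \<Longrightarrow> (zeta_act q r ^^ m) z = z"
  by (simp add: zeta_act_funpow vec_eq_iff unit_root_eq_1_if_dvd)

lemma zeta_act_funpow_fixed_imp_dvd:
  assumes "0 < q" and coprime: "\<forall>j. coprime (r j) (2 * q)"
    and fixed: "(zeta_act q r ^^ m) z = z" and "z \<noteq> 0"
  shows "2 * q dvd m"
proof -
  obtain j where "z $ j \<noteq> 0" using \<open>z \<noteq> 0\<close> by (auto simp: vec_eq_iff)
  moreover have "unit_root (2 * q) (r j * m) * z $ j = z $ j"
    using fixed by (simp add: zeta_act_funpow vec_eq_iff)
  ultimately have "2 * q dvd r j * m" using \<open>0 < q\<close> by (simp add: unit_root_eq_1_iff)
  then show ?thesis using coprime by (metis coprime_commute coprime_dvd_mult_right_iff)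
qed

lemma omega_power_eq_1_iff:
  assumes "0 < s" and "coprime t (3 * s)"
  shows "omega t s ^ m = 1 \<longleftrightarrow> 3 * s dvd m"
proof -
  have "omega t s ^ m = 1 \<longleftrightarrow> 3 * s dvd t * m"
    using \<open>0 < s\<close> by (simp add: omega_power unit_root_eq_1_iff)
  then show ?thesis using assms(2) by (metis coprime_commute coprime_dvd_mult_right_iff)
qed

definition pair_twist ::
    "nat \<Rightarrow> ('n::finite \<Rightarrow> nat) \<Rightarrow> (complex^'n) \<times> (complex^'n) \<Rightarrow> (complex^'n) \<times> (complex^'n)"
  where
  "pair_twist q r = (\<lambda>(z, w). (w, zeta_act q r z))"

definition triple_twist ::
    "nat \<Rightarrow> nat \<Rightarrow> complex \<times> complex \<times> complex \<Rightarrow> complex \<times> complex \<times> complex"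
  where
  "triple_twist t s = (\<lambda>(x1, x2, x3). (x2, x3, omega t s * x1))"

lemma pair_twist_funpow_even:
  "(pair_twist q r ^^ (2 * m)) (z, w) = ((zeta_act q r ^^ m) z, (zeta_act q r ^^ m) w)"
  by (induction m) (simp_all add: pair_twist_def)

lemma triple_twist_funpow_triple:
  "(triple_twist t s ^^ (3 * m)) (x1, x2, x3) =
    (omega t s ^ m * x1, omega t s ^ m * x2, omega t s ^ m * x3)"
  by (induction m) (simp_all add: triple_twist_def numeral_3_eq_3)

lemma pair_twist_funpow_period: "(pair_twist q r ^^ (4 * q)) p = p"
proof -
  have "pair_twist q r ^^ (4 * q) = pair_twist q r ^^ (2 * (2 * q))" by simp
  then show ?thesis by (cases p) (simp only: pair_twist_funpow_even zeta_act_funpow_period dvd_refl)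
qed

lemma triple_twist_funpow_period: "(triple_twist t s ^^ (9 * s)) x = x"
  using triple_twist_funpow_triple[where m = "3 * s"]
  by (cases x) (simp add: omega_power unit_root_eq_1_if_dvd)

lemma pair_twist_fixed_imp_dvd:
  assumes "0 < q" and "\<forall>j. coprime (r j) (2 * q)"
    and fixed: "(pair_twist q r ^^ k) p = p" and "p \<noteq> 0"
  shows "4 * q dvd k"
proof -
  obtain z w where p: "p = (z, w)" by fastforce
  have "2 * q dvd m" if "(pair_twist q r ^^ (2 * m)) p = p" for m
  proof -
    have "(zeta_act q r ^^ m) z = z" "(zeta_act q r ^^ m) w = w"
      using that by (simp_all add: p pair_twist_funpow_even)
    moreover have "z \<noteq> 0 \<or> w \<noteq> 0" using \<open>p \<noteq> 0\<close> by (simp add: p zero_prod_def)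
    ultimately show ?thesis using zeta_act_funpow_fixed_imp_dvd[OF assms(1,2)] by blast
  qed
  then show ?thesis using funpow_fixed_exponent_dvd[of 2 "2 * q", OF _ _ fixed] by simp
qed

lemma triple_twist_fixed_imp_dvd:
  assumes "0 < s" and "coprime t (3 * s)"
    and fixed: "(triple_twist t s ^^ k) x = x" and "x \<noteq> 0"
  shows "9 * s dvd k"
proof -
  obtain x1 x2 x3 where x: "x = (x1, x2, x3)" by (cases x) auto
  have "3 * s dvd m" if "(triple_twist t s ^^ (3 * m)) x = x" for m
  proof -
    have "omega t s ^ m * x1 = x1" "omega t s ^ m * x2 = x2" "omega t s ^ m * x3 = x3"
      using that by (simp_all add: x triple_twist_funpow_triple)
    moreover have "x1 \<noteq> 0 \<or> x2 \<noteq> 0 \<or> x3 \<noteq> 0" using \<open>x \<noteq> 0\<close> by (simp add: x zero_prod_def)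
    ultimately have "omega t s ^ m = 1" by auto
    then show ?thesis using omega_power_eq_1_iff[OF assms(1,2)] by blast
  qed
  then show ?thesis using funpow_fixed_exponent_dvd[of 3 "3 * s", OF _ _ fixed] by simp
qed

lemma K2_sph_funpow:
  "(K2_sph q r t s ^^ n) (z, w, x) =
    (fst ((pair_twist q r ^^ n) (z, w)), snd ((pair_twist q r ^^ n) (z, w)), (triple_twist t s ^^ n) x)"
  by (induction n) (auto simp: K2_sph_def pair_twist_def triple_twist_def split: prod.splits)

lemma K2_sph_funpow_period:
  assumes "4 * q = 9 * s"
  shows "(K2_sph q r t s ^^ (4 * q)) y = y"
proof -
  have "(triple_twist t s ^^ (4 * q)) x = x" for x
    unfolding assms by (rule triple_twist_funpow_period)
  then show ?thesis by (cases y) (simp add: K2_sph_funpow pair_twist_funpow_period)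
qed

lemma K2_sph_acts_freely:
  assumes "0 < q" and "0 < s" and "4 * q = 9 * s"
    and "\<forall>j. coprime (r j) (2 * q)" and "coprime t (3 * s)"
  shows "acts_freely (K2_sph q r t s) (4 * q) Sph"
proof (rule acts_freely_if_fixed_exponent_dvd)
  fix y k assume "y \<in> Sph" and fixed: "(K2_sph q r t s ^^ k) y = y"
  obtain z w x where y: "y = (z, w, x)" by (cases y) auto
  have zw: "(pair_twist q r ^^ k) (z, w) = (z, w)" and x: "(triple_twist t s ^^ k) x = x"
    using fixed by (simp_all add: y K2_sph_funpow prod_eq_iff)
  have "(z, w) \<noteq> 0 \<or> x \<noteq> 0"
    using \<open>y \<in> Sph\<close> by (auto simp: y Sph_def zero_prod_def)
  then show "4 * q dvd k"
    using pair_twist_fixed_imp_dvd[OF assms(1,4) zw] triple_twist_fixed_imp_dvd[OF assms(2,5) x]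
      \<open>4 * q = 9 * s\<close> by auto
qed

lemma K2_funpow:
  "(K2 q r t s ^^ n) ((U, V), y) = (if even n then (U, V) else (V, U), (K2_sph q r t s ^^ n) y)"
  by (induction n) (auto simp: K2_def)

lemma K2_funpow_even: "even n \<Longrightarrow> (K2 q r t s ^^ n) x = (fst x, (K2_sph q r t s ^^ n) (snd x))"
  using K2_funpow[where n = n and U = "fst (fst x)" and V = "snd (fst x)" and y = "snd x"] by simp

lemma K2_image_subset:
  "K2 q r t s ` (Omega a b \<times> (Sph :: 'n::finite sphpt set)) \<subseteq> Omega a b \<times> Sph"
proof -
  have "norm (zeta_act q r z) = norm z" for z :: "complex^'n"
    unfolding norm_vec_def zeta_act_def by (simp add: norm_mult)
  moreover have "norm (omega t s) = 1"
    unfolding omega_def by simp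
  ultimately show ?thesis
    by (auto simp: K2_def K2_sph_def Omega_def Sph_def norm_mult mult.commute)
qed

lemma continuous_on_K2: "continuous_on UNIV (K2 q r t s)"
  unfolding K2_def K2_sph_def zeta_act_def case_prod_beta by (intro continuous_intros)

lemma K2_funpow_period:
  assumes "4 * q = 9 * s"
  shows "(K2 q r t s ^^ (4 * q)) x = x"
  by (simp add: K2_funpow_even K2_sph_funpow_period[OF assms])

lemma K2_acts_freely:
  assumes "acts_freely (K2_sph q r t s) n Sph"
  shows "acts_freely (K2 q r t s) n (Omega a b \<times> Sph)"
  using assms unfolding acts_freely_def by (force simp: K2_funpow)

lemma homeomorphism_K2:
  assumes "0 < q" and "4 * q = 9 * s"
  shows "homeomorphism (Omega a b \<times> Sph) (Omega a b \<times> Sph)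
    (K2 q r t s) (K2 q r t s ^^ (4 * q - 1))"
  using assms(1)
  by (intro homeomorphism_if_periodic[OF continuous_on_subset[OF continuous_on_K2 subset_UNIV]
        K2_image_subset]) (simp_all add: K2_funpow_period[OF assms(2)])

lemma Least_four_times_eq_nine_times:
  "(LEAST q::nat. 0 < q \<and> (\<exists>s::nat. 0 < s \<and> 4 * q = 9 * s)) = 9"
proof (rule Least_equality)
  show "0 < (9::nat) \<and> (\<exists>s::nat. 0 < s \<and> 4 * 9 = 9 * s)" by auto
next
  fix q :: nat assume "0 < q \<and> (\<exists>s::nat. 0 < s \<and> 4 * q = 9 * s)"
  then obtain s where "0 < q" "4 * q = 9 * s" by blast
  then show "9 \<le> q" by presburger
qed

theorem mainTheorem6:
  fixes q s t :: nat and r :: "'n::finite \<Rightarrow> nat" and a b :: ereal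
  assumes "0 < q" and "0 < s" and "4 * q = 9 * s"
    and "\<forall>j. 0 < r j \<and> coprime (r j) (2 * q)"
    and "0 < t" and "coprime t (3 * s)"
    and "a < 0" and "0 < b"
  defines "X \<equiv> Omega a b \<times> (Sph :: 'n sphpt set)"
  shows "K2 q r t s ` X = X
    \<and> (\<exists>h. homeomorphism X X (K2 q r t s) h)
    \<and> generates_cyclic_of_order (K2 q r t s) X (4 * q)
    \<and> acts_freely (K2 q r t s) (4 * q) X
    \<and> properly_discontinuous (K2 q r t s) (4 * q) X
    \<and> (\<forall>x\<in>X. fst ((K2 q r t s ^^ 2) x) = fst x)
    \<and> (\<forall>x\<in>X. snd ((K2 q r t s ^^ 2) x) = (K2_sph q r t s ^^ 2) (snd x))
    \<and> generates_cyclic_of_order (K2_sph q r t s ^^ 2) Sph (2 * q)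
    \<and> acts_freely (K2_sph q r t s ^^ 2) (2 * q) Sph
    \<and> 9 dvd q
    \<and> (LEAST q'::nat. 0 < q' \<and> (\<exists>s'::nat. 0 < s' \<and> 4 * q' = 9 * s')) = 9"
proof -
  have coprime_r: "\<forall>j. coprime (r j) (2 * q)" using assms(4) by blast
  have y\<^sub>0: "(0, 0, 1, 0, 0) \<in> (Sph :: 'n sphpt set)" by (simp add: Sph_def)
  have x\<^sub>0: "((0, 0), (0, 0, 1, 0, 0)) \<in> X"
    using assms(7,8) y\<^sub>0 by (simp add: X_def Omega_def zero_ereal_def)
  have free_sph: "acts_freely (K2_sph q r t s) (4 * q) Sph"
    using assms(1-3) coprime_r assms(6) by (rule K2_sph_acts_freely)
  have free: "acts_freely (K2 q r t s) (4 * q) X"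
    unfolding X_def using free_sph by (rule K2_acts_freely)
  have free_sph_square: "acts_freely (K2_sph q r t s ^^ 2) (2 * q) Sph"
    using free_sph by (intro acts_freely_funpow) simp_all
  have homeo: "homeomorphism X X (K2 q r t s) (K2 q r t s ^^ (4 * q - 1))"
    unfolding X_def using assms(1,3) by (rule homeomorphism_K2)
  then have "K2 q r t s ` X = X" by (simp add: homeomorphism_def)
  moreover have "generates_cyclic_of_order (K2 q r t s) X (4 * q)"
    using assms(1) x\<^sub>0 free
    by (intro generates_cyclic_of_order_if_free) (simp_all add: K2_funpow_period[OF assms(3)])
  moreover have "generates_cyclic_of_order (K2_sph q r t s ^^ 2) Sph (2 * q)"
    using assms(1) y\<^sub>0 free_sph_square
    by (intro generates_cyclic_of_order_if_free)
      (simp_all add: funpow_mult K2_sph_funpow_period[OF assms(3)])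
  moreover have "9 dvd q" using assms(3) by presburger
  ultimately show ?thesis
    unfolding Least_four_times_eq_nine_times
    using homeo free free_sph_square properly_discontinuous_if_free[OF continuous_on_K2 free]
    by (simp add: K2_funpow_even) blast
qed

end
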